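(* Let $\lambda_0,\lambda_1,\lambda_\infty$ be integers with $0<\lambda_x<p^N$ for $x\in\{0,1,\infty\}$ and $\lambda_0+\lambda_1+\lambda_\infty$ odd and $<2p^N$. Let $\phi:\mathbb P\to\mathbb P$ be a finite, separable, tamely ramified morphism that has ramification index $\lambda_x$ at $[x]$ for $x\in\{0,1,\infty\}$ and is étale elsewhere. Then $\phi([0]),\phi([1]),\phi([\infty])$ are pairwise distinct.
   Context: $p$ is a prime, $N\ge1$, $k$ an algebraically closed field of characteristic $p$, $\mathbb P=\mathbb P^1_k$, and $[0],[1],[\infty]\in\mathbb P(k)$ the points with coordinates $0,1,\infty$. *)

theory Defs
  imports "HOL-Computational_Algebra.Polynomial"
begin

text \<open>Points of the projective line P^1(k): \<open>Some a\<close> is the affine point a, \<open>None\<close> is \<infinity>.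
A finite morphism P^1 \<rightarrow> P^1 over k is given by a non-constant rational function P/Q,
represented by a pair of coprime polynomials (P, Q) not both constant.\<close>

type_synonym 'k ppt = "'k option"

definition is_morphism :: "'k::field poly \<times> 'k poly \<Rightarrow> bool" where
  "is_morphism f \<longleftrightarrow> coprime (fst f) (snd f) \<and> snd f \<noteq> 0
     \<and> max (degree (fst f)) (degree (snd f)) > 0"

definition mdeg :: "'k::field poly \<times> 'k poly \<Rightarrow> nat" where
  "mdeg f = max (degree (fst f)) (degree (snd f))"

text \<open>t^d P(1/t), the coordinate change t \<mapsto> 1/t (with d = degree of the morphism).\<close>
definition rev_deg :: "nat \<Rightarrow> 'k::field poly \<Rightarrow> 'k poly" where
  "rev_deg d P = (\<Sum>i\<le>d. monom (coeff P (d - i)) i)"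

definition at_inf_chart :: "'k::field poly \<times> 'k poly \<Rightarrow> 'k poly \<times> 'k poly" where
  "at_inf_chart f = (rev_deg (mdeg f) (fst f), rev_deg (mdeg f) (snd f))"

definition aff_val :: "'k::field poly \<times> 'k poly \<Rightarrow> 'k \<Rightarrow> 'k ppt" where
  "aff_val f a = (if poly (snd f) a = 0 then None else Some (poly (fst f) a / poly (snd f) a))"

definition mval :: "'k::field poly \<times> 'k poly \<Rightarrow> 'k ppt \<Rightarrow> 'k ppt" where
  "mval f x = (case x of Some a \<Rightarrow> aff_val f a | None \<Rightarrow> aff_val (at_inf_chart f) 0)"

definition aff_ram :: "'k::field poly \<times> 'k poly \<Rightarrow> 'k \<Rightarrow> nat" where
  "aff_ram f a = (case aff_val f a of
       None \<Rightarrow> order a (snd f)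
     | Some b \<Rightarrow> order a (fst f - smult b (snd f)))"

definition ram_index :: "'k::field poly \<times> 'k poly \<Rightarrow> 'k ppt \<Rightarrow> nat" where
  "ram_index f x = (case x of Some a \<Rightarrow> aff_ram f a | None \<Rightarrow> aff_ram (at_inf_chart f) 0)"

text \<open>Separable: the extension k(t)/k(f) is separable, i.e. df/dt \<noteq> 0.\<close>
definition separable_morphism :: "'k::field poly \<times> 'k poly \<Rightarrow> bool" where
  "separable_morphism f \<longleftrightarrow> pderiv (fst f) * snd f - fst f * pderiv (snd f) \<noteq> 0"

definition tamely_ramified :: "'k::field poly \<times> 'k poly \<Rightarrow> bool" where
  "tamely_ramified f \<longleftrightarrow> (\<forall>x. \<not> CHAR('k) dvd ram_index f x)"

end

theory Submission
  imports Defs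
begin

text \<open>
  This is Riemann--Hurwitz for a tame cover \<open>P/Q\<close> of the line, made explicit through the
  Wronskian \<open>W = P'Q - PQ'\<close>. At an affine point \<open>a\<close> with ramification index \<open>e\<^sub>a\<close>, the
  polynomial \<open>W\<close> vanishes to order exactly \<open>e\<^sub>a - 1\<close> because \<open>e\<^sub>a\<close> is nonzero in \<open>k\<close>, and
  \<open>deg W = 2d - e\<^sub>\<infinity> - 1\<close>. As \<open>k\<close> is algebraically closed and only \<open>0\<close> and \<open>1\<close> ramify in
  the affine part, \<open>e\<^sub>0 + e\<^sub>1 + e\<^sub>\<infinity> = 2d + 1\<close>. Every \<open>e\<^sub>x \<le> d\<close>, and two distinct
  points of one fibre satisfy \<open>e\<^sub>x + e\<^sub>y \<le> d\<close>; so if two of the three points had the same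
  image, the sum would be at most \<open>2d\<close>. Tameness already forces every \<open>e\<^sub>x \<noteq> 0\<close>.
\<close>

definition wronskian :: "'a::idom poly \<Rightarrow> 'a poly \<Rightarrow> 'a poly" where
  "wronskian A B = pderiv A * B - A * pderiv B"

lemma wronskian_swap: "wronskian B A = - wronskian A B"
  by (simp add: wronskian_def algebra_simps)

lemma wronskian_diff_smult_left: "wronskian (A - smult b B) B = wronskian A B"
  by (simp add: wronskian_def pderiv_diff pderiv_smult algebra_simps)

lemma coeff_mult_at_degree_bounds:
  fixes p q :: "'a::comm_semiring_1 poly"
  assumes "degree p \<le> i" "degree q \<le> j"
  shows "coeff (p * q) (i + j) = coeff p i * coeff q j"
proof -
  have "coeff (p * q) (i + j) = (\<Sum>k\<le>i+j. coeff p k * coeff q (i + j - k))"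
    by (rule coeff_mult)
  also have "\<dots> = (\<Sum>k\<le>i+j. if k = i then coeff p i * coeff q j else 0)"
  proof (rule sum.cong)
    fix k
    show "coeff p k * coeff q (i + j - k) = (if k = i then coeff p i * coeff q j else 0)"
    proof (cases "k = i")
      case False
      then have "i < k \<or> j < i + j - k" by auto
      then show ?thesis using assms False by (auto simp: coeff_eq_0)
    qed simp
  qed simp
  finally show ?thesis by simp
qed

lemma degree_pderiv_le: "degree (pderiv p) \<le> degree p - 1"
  by (rule degree_le) (auto simp: coeff_pderiv coeff_eq_0)

lemma coeff_pderiv_degree_minus_one:
  "coeff (pderiv p) (degree p - 1) = of_nat (degree p) * lead_coeff p"
  by (cases "degree p") (simp_all add: coeff_pderiv coeff_eq_0)

lemma coeff_mult_pderiv_left: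
  fixes A B :: "'a::idom poly"
  shows "coeff (pderiv A * B) (degree A + degree B - 1)
           = of_nat (degree A) * lead_coeff A * lead_coeff B"
proof (cases "degree A")
  case 0
  then show ?thesis by (auto elim: degree_eq_zeroE)
next
  case (Suc m)
  then have "coeff (pderiv A * B) ((degree A - 1) + degree B)
               = coeff (pderiv A) (degree A - 1) * lead_coeff B"
    using degree_pderiv_le[of A] by (intro coeff_mult_at_degree_bounds) auto
  then show ?thesis using Suc coeff_pderiv_degree_minus_one[of A] by simp
qed

lemma degree_mult_pderiv_left_le:
  fixes A B :: "'a::idom poly"
  shows "degree (pderiv A * B) \<le> degree A + degree B - 1"
proof (cases "degree A")
  case 0
  then show ?thesis by (auto elim: degree_eq_zeroE)
next
  case (Suc m)
  then show ?thesis using degree_mult_le[of "pderiv A" B] degree_pderiv_le[of A] by simp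
qed

lemma degree_wronskian:
  fixes A B :: "'a::field poly"
  assumes "A \<noteq> 0" "B \<noteq> 0" "(of_nat (degree A) :: 'a) \<noteq> of_nat (degree B)"
  shows "degree (wronskian A B) = degree A + degree B - 1"
proof -
  define k where "k = degree A + degree B - 1"
  have "coeff (wronskian A B) k
          = (of_nat (degree A) - of_nat (degree B)) * lead_coeff A * lead_coeff B"
    using coeff_mult_pderiv_left[of A B] coeff_mult_pderiv_left[of B A]
    by (simp add: wronskian_def k_def add.commute algebra_simps)
  also have "\<dots> \<noteq> 0" using assms by simp
  finally have "k \<le> degree (wronskian A B)" by (rule le_degree)
  moreover have "degree (wronskian A B) \<le> k"
    using degree_mult_pderiv_left_le[of A B] degree_mult_pderiv_left_le[of B A]
    unfolding wronskian_def k_def by (intro degree_diff_le) (simp_all add: mult.commute add.commute)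
  ultimately show ?thesis by (simp add: k_def)
qed

lemma order_linear_power_mult:
  fixes V :: "'a::idom poly"
  assumes "poly V a \<noteq> 0"
  shows "order a ([:-a, 1:] ^ n * V) = n"
  using assms by (subst order_mult) (auto simp: order_power_n_n order_0I)

text \<open>If \<open>R = (t - a)\<^sup>e U\<close>, then \<open>R'T - RT' = (t - a)\<^sup>e\<^sup>-\<^sup>1 (e U T + (t - a)(U'T - UT'))\<close>.\<close>

lemma order_wronskian:
  fixes R T :: "'a::field poly"
  assumes "R \<noteq> 0" "poly T a \<noteq> 0" "order a R \<ge> 1" "(of_nat (order a R) :: 'a) \<noteq> 0"
  shows "order a (wronskian R T) = order a R - 1"
proof -
  define e X where "e = order a R" and "X = [:-a, 1:]"
  obtain U where U: "R = X ^ e * U" using order_1[of a R] by (auto simp: e_def X_def elim: dvdE)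
  then have "order a R = e + order a U"
    using assms(1) by (simp add: order_mult order_power_n_n X_def)
  then have "order a U = 0" by (simp add: e_def)
  then have "poly U a \<noteq> 0" using U assms(1) by (simp add: order_root)
  obtain e' where e': "e = Suc e'" using assms(3) by (auto simp: e_def dest: Suc_le_D)
  have "pderiv X = 1" by (simp add: X_def pderiv_pCons)
  then have "pderiv R = smult (of_nat e) (X ^ e') * U + X ^ e * pderiv U"
    unfolding U e' pderiv_mult pderiv_power_Suc by (simp add: algebra_simps)
  then have "wronskian R T = X ^ e' * (smult (of_nat e) U * T + X * wronskian U T)"
    unfolding wronskian_def by (simp add: U e' algebra_simps)
  moreover have "poly (smult (of_nat e) U * T + X * wronskian U T) a \<noteq> 0"
    using \<open>poly U a \<noteq> 0\<close> assms(2,4) by (simp add: e_def X_def)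
  ultimately have "order a (wronskian R T) = e'"
    unfolding X_def using order_linear_power_mult by metis
  then show ?thesis using e' by (simp add: e_def)
qed

lemma order_add_order_le_degree:
  fixes X :: "'a::idom poly"
  assumes "X \<noteq> 0" "a \<noteq> c"
  shows "order a X + order c X \<le> degree X"
proof -
  let ?M = "proots X"
  have "order a X + order c X = sum (count ?M) {a, c}" using assms by simp
  also have "\<dots> \<le> sum (count ?M) (set_mset ?M \<union> {a, c})" by (rule sum_mono2) auto
  also have "\<dots> = sum (count ?M) (set_mset ?M)"
    by (rule sum.mono_neutral_right) (auto simp: not_in_iff)
  also have "\<dots> = size ?M" by (simp add: size_multiset_overloaded_eq)
  also have "\<dots> \<le> degree X" by (rule size_proots_le)
  finally show ?thesis .
qed

lemma size_proots_alg_closed: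
  fixes p :: "'a::alg_closed_field poly"
  assumes "p \<noteq> 0"
  shows "size (proots p) = degree p"
proof -
  obtain A where A: "size A = degree p" "p = smult (lead_coeff p) (\<Prod>x\<in>#A. [:-x, 1:])"
    using alg_closed_imp_factorization[OF assms] by blast
  have nonzero: "0 \<notin># image_mset (\<lambda>x. [:-x, 1:]) A" by auto
  have "proots (\<Prod>x\<in>#A. [:-x, 1:]) = (\<Sum>x\<in>#A. proots [:-x, 1:])"
    using proots_prod_mset[OF nonzero] by (simp add: multiset.map_comp o_def)
  also have "\<dots> = A" by (induction A) auto
  finally have "proots p = A" using A assms by (metis leading_coeff_0_iff proots_smult)
  then show ?thesis using A by simp
qed

lemma degree_eq_sum_order_alg_closed:
  fixes p :: "'a::alg_closed_field poly"
  assumes "p \<noteq> 0" "finite S" "\<And>a. poly p a = 0 \<Longrightarrow> a \<in> S"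
  shows "degree p = (\<Sum>a\<in>S. order a p)"
proof -
  have "degree p = sum (count (proots p)) (set_mset (proots p))"
    using size_proots_alg_closed[OF assms(1)] by (simp add: size_multiset_overloaded_eq)
  also have "\<dots> = sum (count (proots p)) S"
    using assms by (intro sum.mono_neutral_left) (auto simp: not_in_iff order_root)
  finally show ?thesis using assms(1) by simp
qed

lemma coeff_rev_deg: "coeff (rev_deg d P) i = (if i \<le> d then coeff P (d - i) else 0)"
  unfolding rev_deg_def by (auto simp: coeff_sum)

lemma rev_deg_diff_smult: "rev_deg d (P - smult b Q) = rev_deg d P - smult b (rev_deg d Q)"
  by (rule poly_eqI) (simp add: coeff_rev_deg)

lemma order_0_rev_deg:
  fixes P :: "'a::field poly"
  assumes "P \<noteq> 0" "degree P \<le> d"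
  shows "order 0 (rev_deg d P) = d - degree P"
proof -
  have lc: "coeff (rev_deg d P) (d - degree P) = lead_coeff P"
    using assms by (simp add: coeff_rev_deg)
  then have "rev_deg d P \<noteq> 0" using assms by auto
  moreover have "d - degree P \<le> order 0 (rev_deg d P)"
    using \<open>rev_deg d P \<noteq> 0\<close>
    by (subst monom_1_dvd_iff[symmetric]) (auto simp: monom_1_dvd_iff' coeff_rev_deg coeff_eq_0)
  moreover have "\<not> Suc (d - degree P) \<le> order 0 (rev_deg d P)"
    using \<open>rev_deg d P \<noteq> 0\<close> lc assms(1)
    by (subst monom_1_dvd_iff[symmetric]) (auto simp: monom_1_dvd_iff')
  ultimately show ?thesis by simp
qed

text \<open>The affine points of the fibre over \<open>v\<close> are the roots of \<open>fibre_poly f v\<close>.\<close>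

definition fibre_poly :: "'k::field poly \<times> 'k poly \<Rightarrow> 'k ppt \<Rightarrow> 'k poly" where
  "fibre_poly f v = (case v of None \<Rightarrow> snd f | Some b \<Rightarrow> fst f - smult b (snd f))"

lemma ram_index_Some: "ram_index f (Some a) = order a (fibre_poly f (mval f (Some a)))"
  by (simp add: ram_index_def mval_def aff_ram_def fibre_poly_def split: option.split)

lemma poly_fibre_poly_mval_Some: "poly (fibre_poly f (mval f (Some a))) a = 0"
  by (simp add: mval_def aff_val_def fibre_poly_def)

lemma fibre_poly_nonzero:
  assumes "is_morphism f"
  shows "fibre_poly f v \<noteq> 0"
proof (cases v)
  case None
  then show ?thesis using assms by (simp add: fibre_poly_def is_morphism_def)
next
  case (Some b)
  show ?thesis
  proof
    assume "fibre_poly f v = 0"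
    then have P: "fst f = smult b (snd f)" using Some by (simp add: fibre_poly_def)
    then have "is_unit (snd f)"
      using assms unfolding is_morphism_def by (metis coprime_common_divisor dvd_refl dvd_smult)
    then have "degree (snd f) = 0" using assms by (simp add: is_unit_iff_degree is_morphism_def)
    moreover from this have "degree (fst f) = 0" unfolding P by simp
    ultimately show False using assms by (simp add: is_morphism_def)
  qed
qed

lemma degree_fibre_poly_le: "degree (fibre_poly f v) \<le> mdeg f"
  by (cases v) (auto simp: fibre_poly_def mdeg_def intro!: degree_diff_le)

lemma mval_None:
  "mval f None = (if coeff (snd f) (mdeg f) = 0 then None
                  else Some (coeff (fst f) (mdeg f) / coeff (snd f) (mdeg f)))"
  by (simp add: mval_def aff_val_def at_inf_chart_def poly_0_coeff_0 coeff_rev_deg)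

lemma degree_snd_eq_mdeg: "mval f None \<noteq> None \<Longrightarrow> degree (snd f) = mdeg f"
  using le_degree[of "snd f" "mdeg f"] by (auto simp: mval_None mdeg_def split: if_splits)

lemma degree_fst_eq_mdeg:
  assumes "is_morphism f" "mval f None = None"
  shows "degree (fst f) = mdeg f"
proof -
  have "coeff (snd f) (mdeg f) = 0" using assms(2) by (simp add: mval_None split: if_splits)
  then have "degree (snd f) \<noteq> mdeg f"
    using assms(1) by (metis is_morphism_def leading_coeff_0_iff)
  then show ?thesis by (auto simp: mdeg_def max_def split: if_splits)
qed

lemma ram_index_None:
  assumes "is_morphism f"
  shows "ram_index f None = mdeg f - degree (fibre_poly f (mval f None))"
proof (cases "mval f None")
  case None
  then have "ram_index f None = order 0 (rev_deg (mdeg f) (snd f))"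
    by (simp add: mval_def ram_index_def aff_ram_def at_inf_chart_def)
  then show ?thesis using None assms
    by (simp add: order_0_rev_deg is_morphism_def mdeg_def fibre_poly_def)
next
  case (Some b)
  then have "ram_index f None = order 0 (rev_deg (mdeg f) (fibre_poly f (Some b)))"
    by (simp add: mval_def ram_index_def aff_ram_def at_inf_chart_def fibre_poly_def
        rev_deg_diff_smult)
  then show ?thesis
    using Some by (simp add: order_0_rev_deg[OF fibre_poly_nonzero[OF assms] degree_fibre_poly_le])
qed

lemma ram_index_le_mdeg:
  assumes "is_morphism f"
  shows "ram_index f x \<le> mdeg f"
proof (cases x)
  case (Some a)
  then show ?thesis
    using order_degree[OF fibre_poly_nonzero[OF assms]] degree_fibre_poly_le
    by (metis ram_index_Some le_trans)
qed (simp add: ram_index_None[OF assms])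

lemma ram_index_add_le_mdeg:
  assumes "is_morphism f" "x \<noteq> y" "mval f x = mval f y"
  shows "ram_index f x + ram_index f y \<le> mdeg f"
proof -
  have affine_None: "ram_index f (Some a) + ram_index f None \<le> mdeg f"
    if "mval f (Some a) = mval f None" for a
    using order_degree[OF fibre_poly_nonzero[OF assms(1)], of a "mval f None"]
      degree_fibre_poly_le[of f "mval f None"]
    unfolding ram_index_Some ram_index_None[OF assms(1)] that by linarith
  show ?thesis
  proof (cases x; cases y)
    fix a c assume xy: "x = Some a" "y = Some c"
    let ?F = "fibre_poly f (mval f y)"
    have "order a ?F + order c ?F \<le> degree ?F"
      using assms(2) xy by (intro order_add_order_le_degree fibre_poly_nonzero assms(1)) auto
    then show ?thesis
      using assms(3) xy degree_fibre_poly_le[of f "mval f y"] by (simp add: ram_index_Some)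
  qed (use assms affine_None in \<open>auto simp: add.commute\<close>)
qed

lemma tame_ram_index_nonzero:
  fixes f :: "'k::field poly \<times> 'k poly"
  shows "tamely_ramified f \<Longrightarrow> (of_nat (ram_index f x) :: 'k) \<noteq> 0"
  by (simp add: tamely_ramified_def of_nat_eq_0_iff_char_dvd)

lemma tame_ram_index_pos: "tamely_ramified f \<Longrightarrow> ram_index f x > 0"
  by (metis tamely_ramified_def dvd_0_right gr0I)

lemma order_wronskian_morphism:
  fixes f :: "'k::field poly \<times> 'k poly"
  assumes "is_morphism f" "tamely_ramified f"
  shows "order a (wronskian (fst f) (snd f)) = ram_index f (Some a) - 1"
proof -
  let ?R = "fibre_poly f (mval f (Some a))"
  have R: "?R \<noteq> 0" "order a ?R \<ge> 1" "(of_nat (order a ?R) :: 'k) \<noteq> 0"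
    using fibre_poly_nonzero[OF assms(1)] poly_fibre_poly_mval_Some[of f a]
      tame_ram_index_nonzero[OF assms(2), of "Some a"]
    by (auto simp: ram_index_Some order_root Suc_le_eq)
  show ?thesis
  proof (cases "poly (snd f) a = 0")
    case False
    then obtain b where "mval f (Some a) = Some b" by (simp add: mval_def aff_val_def)
    then show ?thesis
      using order_wronskian[OF R(1) False R(2,3)]
      by (simp add: ram_index_Some fibre_poly_def wronskian_diff_smult_left)
  next
    case True
    then have R_eq: "?R = snd f" by (simp add: mval_def aff_val_def fibre_poly_def)
    have "poly (fst f) a \<noteq> 0"
    proof
      assume "poly (fst f) a = 0"
      then have "[:-a, 1:] dvd fst f" "[:-a, 1:] dvd snd f"
        using True by (auto simp: poly_eq_0_iff_dvd)
      then show False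
        using assms(1) by (auto simp: is_morphism_def is_unit_iff_degree dest: coprime_common_divisor)
    qed
    then have "order a (wronskian (snd f) (fst f)) = order a (snd f) - 1"
      using order_wronskian[OF R(1) _ R(2,3)] unfolding R_eq by blast
    then show ?thesis
      by (simp only: wronskian_swap[of "snd f" "fst f"] order_uminus ram_index_Some R_eq)
  qed
qed

lemma degree_wronskian_morphism:
  fixes f :: "'k::field poly \<times> 'k poly"
  assumes "is_morphism f" "tamely_ramified f"
  shows "degree (wronskian (fst f) (snd f)) + ram_index f None + 1 = 2 * mdeg f"
proof -
  let ?R = "fibre_poly f (mval f None)"
  have einf: "ram_index f None = mdeg f - degree ?R" by (rule ram_index_None[OF assms(1)])
  have pos: "ram_index f None > 0" using tame_ram_index_pos[OF assms(2)] .
  have dR: "mdeg f = degree ?R + ram_index f None"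
    using einf degree_fibre_poly_le[of f "mval f None"] pos by simp
  have tame: "(of_nat (degree ?R) :: 'k) \<noteq> of_nat (mdeg f)"
    using tame_ram_index_nonzero[OF assms(2), of None] by (subst dR) simp
  show ?thesis
  proof (cases "mval f None")
    case (Some b)
    have "snd f \<noteq> 0" using assms(1) by (simp add: is_morphism_def)
    moreover have "degree (snd f) = mdeg f" using Some by (intro degree_snd_eq_mdeg) simp
    ultimately have "degree (wronskian ?R (snd f)) = degree ?R + mdeg f - 1"
      using degree_wronskian[OF fibre_poly_nonzero[OF assms(1)]] tame by simp
    then show ?thesis
      using Some dR pos by (simp add: fibre_poly_def wronskian_diff_smult_left)
  next
    case None
    then have R_eq: "?R = snd f" by (simp add: fibre_poly_def)
    have deg_fst: "degree (fst f) = mdeg f" using degree_fst_eq_mdeg[OF assms(1) None] .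
    moreover have "mdeg f > 0" using assms(1) by (simp add: is_morphism_def mdeg_def)
    ultimately have "fst f \<noteq> 0" by auto
    moreover have "snd f \<noteq> 0" using assms(1) by (simp add: is_morphism_def)
    ultimately have "degree (wronskian (fst f) (snd f)) = degree (fst f) + degree (snd f) - 1"
      using tame deg_fst R_eq by (intro degree_wronskian) auto
    then show ?thesis using dR R_eq deg_fst pos by simp
  qed
qed

theorem riemann_hurwitz_affine_branch_set:
  fixes f :: "'k::alg_closed_field poly \<times> 'k poly"
  assumes "is_morphism f" "separable_morphism f" "tamely_ramified f"
    and "finite S" "\<And>a. a \<notin> S \<Longrightarrow> ram_index f (Some a) = 1"
  shows "(\<Sum>a\<in>S. ram_index f (Some a) - 1) + ram_index f None + 1 = 2 * mdeg f"
proof -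
  let ?W = "wronskian (fst f) (snd f)"
  have "?W \<noteq> 0" using assms(2) by (simp add: separable_morphism_def wronskian_def)
  have "poly ?W a = 0 \<Longrightarrow> a \<in> S" for a
    using assms(5)[of a] order_wronskian_morphism[OF assms(1,3), of a] \<open>?W \<noteq> 0\<close>
    by (auto simp: order_root)
  then have "degree ?W = (\<Sum>a\<in>S. ram_index f (Some a) - 1)"
    using degree_eq_sum_order_alg_closed[OF \<open>?W \<noteq> 0\<close> assms(4)]
    by (simp add: order_wronskian_morphism[OF assms(1,3)])
  then show ?thesis using degree_wronskian_morphism[OF assms(1,3)] by simp
qed

theorem mainTheorem16:
  fixes p N :: nat and l0 l1 linf :: int
    and f :: "'k::alg_closed_field poly \<times> 'k poly"
  assumes "prime p" and "CHAR('k) = p" and "N \<ge> 1"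
    and "0 < l0" "l0 < int p ^ N" "0 < l1" "l1 < int p ^ N" "0 < linf" "linf < int p ^ N"
    and "odd (l0 + l1 + linf)" "l0 + l1 + linf < 2 * int p ^ N"
    and "is_morphism f" "separable_morphism f" "tamely_ramified f"
    and "int (ram_index f (Some 0)) = l0" "int (ram_index f (Some 1)) = l1"
    and "int (ram_index f None) = linf"
    and "\<forall>x. x \<notin> {Some 0, Some 1, None} \<longrightarrow> ram_index f x = 1"
  shows "mval f (Some 0) \<noteq> mval f (Some 1) \<and> mval f (Some 0) \<noteq> mval f None
         \<and> mval f (Some 1) \<noteq> mval f None"
proof -
  let ?e = "ram_index f"
  have "(\<Sum>a\<in>{0, 1}. ?e (Some a) - 1) + ?e None + 1 = 2 * mdeg f"
    using assms(18) by (intro riemann_hurwitz_affine_branch_set[OF assms(12-14)]) auto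
  then have sum: "?e (Some 0) + ?e (Some 1) + ?e None = 2 * mdeg f + 1"
    using tame_ram_index_pos[OF assms(14), of "Some 0"] tame_ram_index_pos[OF assms(14), of "Some 1"]
    by simp
  have fibre: "?e x + ?e y \<le> mdeg f" if "x \<noteq> y" "mval f x = mval f y" for x y
    using ram_index_add_le_mdeg[OF assms(12) that] .
  have le: "?e x \<le> mdeg f" for x using ram_index_le_mdeg[OF assms(12)] .
  show ?thesis
  proof (intro conjI notI)
    assume "mval f (Some 0) = mval f (Some 1)"
    then show False using fibre[of "Some 0" "Some 1"] le[of None] sum by simp
  next
    assume "mval f (Some 0) = mval f None"
    then show False using fibre[of "Some 0" None] le[of "Some 1"] sum by simp
  next
    assume "mval f (Some 1) = mval f None"
    then show False using fibre[of "Some 1" None] le[of "Some 0"] sum by simp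
  qed
qed

end
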